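(* For $n\ge1$, $m(W_n)=\frac{(n-1)n(n+1)}{6}$ and $m(M_n)=0$; moreover $\frac{(n-1)n(n+1)}{6}$ equals the number of meet-irreducible elements of $(\mathcal{Q}_n,\le)$.
   Context: $L_n=\{0,\dots,n\}$. For a map $Q:L_n\times L_n\to\mathbb{R}$ write $|Q|=\sum_{i,j=1}^{n}Q(i,j)$. $M_n(i,j)=\min\{i,j\}$ and $W_n(i,j)=\max\{i+j-n,0\}$, and $m(Q)=|M_n|-|Q|$. $\mathcal{Q}_n$ is the set of irreducible discrete quasi-copulas: maps $Q:L_n\times L_n\to L_n$ (onto) with $Q(i,0)=Q(0,i)=0$, $Q(i,n)=Q(n,i)=i$, non-decreasing in each argument, and $Q(i,j)+Q(i',j')\ge Q(i,j')+Q(i',j)$ whenever $i\le i'$, $j\le j'$ and one of $i,i',j,j'$ lies in $\{0,n\}$; ordered by $P\le Q$ iff $P(i,j)\le Q(i,j)$ for all $i,j$. An element $z$ of a finite poset is meet-irreducible if it is not the maximum and $z=x\wedge y$ implies $z=x$ or $z=y$. *)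

theory Defs
  imports Main
begin

definition Ln :: "nat \<Rightarrow> nat set" where "Ln n = {0..n}"

definition Mn :: "nat \<Rightarrow> nat \<Rightarrow> nat \<Rightarrow> nat" where "Mn n i j = min i j"

(* nat subtraction truncates: (i + j) - n = max (i + j - n) 0 *)
definition Wn :: "nat \<Rightarrow> nat \<Rightarrow> nat \<Rightarrow> nat" where "Wn n i j = (i + j) - n"

definition qnorm :: "nat \<Rightarrow> (nat \<Rightarrow> nat \<Rightarrow> nat) \<Rightarrow> int" where
  "qnorm n Q = (\<Sum>i=1..n. \<Sum>j=1..n. int (Q i j))"

definition mq :: "nat \<Rightarrow> (nat \<Rightarrow> nat \<Rightarrow> nat) \<Rightarrow> int" where
  "mq n Q = qnorm n (Mn n) - qnorm n Q"

(* maps L_n x L_n -> L_n, represented as functions on nat, extended by 0 outside L_n x L_n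
   so that distinct maps on L_n x L_n correspond to distinct representatives *)
definition IDQC :: "nat \<Rightarrow> (nat \<Rightarrow> nat \<Rightarrow> nat) set" where
  "IDQC n = {Q.
     (\<forall>i j. (i > n \<or> j > n) \<longrightarrow> Q i j = 0) \<and>
     (\<lambda>(i,j). Q i j) ` (Ln n \<times> Ln n) = Ln n \<and>
     (\<forall>i\<in>Ln n. Q i 0 = 0 \<and> Q 0 i = 0 \<and> Q i n = i \<and> Q n i = i) \<and>
     (\<forall>i\<in>Ln n. \<forall>i'\<in>Ln n. \<forall>j\<in>Ln n. i \<le> i' \<longrightarrow> Q i j \<le> Q i' j) \<and>
     (\<forall>i\<in>Ln n. \<forall>j\<in>Ln n. \<forall>j'\<in>Ln n. j \<le> j' \<longrightarrow> Q i j \<le> Q i j') \<and>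
     (\<forall>i\<in>Ln n. \<forall>i'\<in>Ln n. \<forall>j\<in>Ln n. \<forall>j'\<in>Ln n.
        i \<le> i' \<and> j \<le> j' \<and> ({i, i', j, j'} \<inter> {0, n} \<noteq> {}) \<longrightarrow>
        Q i j + Q i' j' \<ge> Q i j' + Q i' j)}"

definition qle :: "nat \<Rightarrow> (nat \<Rightarrow> nat \<Rightarrow> nat) \<Rightarrow> (nat \<Rightarrow> nat \<Rightarrow> nat) \<Rightarrow> bool" where
  "qle n P Q = (\<forall>i\<in>Ln n. \<forall>j\<in>Ln n. P i j \<le> Q i j)"

definition is_meet :: "nat \<Rightarrow> (nat \<Rightarrow> nat \<Rightarrow> nat) \<Rightarrow> (nat \<Rightarrow> nat \<Rightarrow> nat) \<Rightarrow> (nat \<Rightarrow> nat \<Rightarrow> nat) \<Rightarrow> bool" where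
  "is_meet n z x y = (z \<in> IDQC n \<and> qle n z x \<and> qle n z y \<and>
     (\<forall>w\<in>IDQC n. qle n w x \<and> qle n w y \<longrightarrow> qle n w z))"

definition meet_irreducible :: "nat \<Rightarrow> (nat \<Rightarrow> nat \<Rightarrow> nat) \<Rightarrow> bool" where
  "meet_irreducible n z = (z \<in> IDQC n \<and>
     \<not> (\<forall>x\<in>IDQC n. qle n x z) \<and>
     (\<forall>x\<in>IDQC n. \<forall>y\<in>IDQC n. is_meet n z x y \<longrightarrow> z = x \<or> z = y))"

end

theory Submission
  imports Defs
begin

text \<open>Together with the boundary conditions, the rectangle inequality touching the boundary says
  exactly that a quasi-copula is non-decreasing and 1-Lipschitz in each argument. Hence the
  pointwise minimum of two quasi-copulas is again one and is their meet, and for every point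
  \<open>(a, b)\<close> and admissible value \<open>v\<close> there is a largest quasi-copula \<open>Q\<close> with \<open>Q a b \<le> v\<close>,
  the cone \<open>min i (min j (v + (i - a) + (j - b)))\<close>. Every quasi-copula is the meet of the cones
  through its own values, so the meet-irreducible elements are precisely the cones different
  from the top element \<open>M\<^sub>n\<close>, i.e. those with \<open>W\<^sub>n a b \<le> v < M\<^sub>n a b\<close>. Their number is
  \<open>\<Sum>\<^sub>a\<^sub>,\<^sub>b (M\<^sub>n a b - W\<^sub>n a b) = m(W\<^sub>n)\<close>, which an elementary summation evaluates.\<close>

lemma IDQC_I:
  assumes outside: "\<And>i j. i > n \<or> j > n \<Longrightarrow> Q i j = 0"
    and boundary: "\<And>i. i \<le> n \<Longrightarrow> Q i 0 = 0 \<and> Q 0 i = 0 \<and> Q i n = i \<and> Q n i = i"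
    and lip_fst: "\<And>i i' j. i \<le> i' \<Longrightarrow> i' \<le> n \<Longrightarrow> j \<le> n \<Longrightarrow>
      Q i j \<le> Q i' j \<and> Q i' j \<le> Q i j + (i' - i)"
    and lip_snd: "\<And>i j j'. j \<le> j' \<Longrightarrow> j' \<le> n \<Longrightarrow> i \<le> n \<Longrightarrow>
      Q i j \<le> Q i j' \<and> Q i j' \<le> Q i j + (j' - j)"
  shows "Q \<in> IDQC n"
proof -
  have image: "(\<lambda>(i,j). Q i j) ` (Ln n \<times> Ln n) = Ln n"
  proof
    show "(\<lambda>(i,j). Q i j) ` (Ln n \<times> Ln n) \<subseteq> Ln n"
    proof clarsimp
      fix i j assume "i \<in> Ln n" "j \<in> Ln n"
      then have "i \<le> n" "j \<le> n" by (auto simp: Ln_def)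
      then show "Q i j \<in> Ln n" using lip_snd[of j n i] boundary[of i] by (auto simp: Ln_def)
    qed
    show "Ln n \<subseteq> (\<lambda>(i,j). Q i j) ` (Ln n \<times> Ln n)"
    proof
      fix k assume k: "k \<in> Ln n"
      then have "k = (\<lambda>(i,j). Q i j) (n, k)" "(n, k) \<in> Ln n \<times> Ln n"
        using boundary by (auto simp: Ln_def)
      then show "k \<in> (\<lambda>(i,j). Q i j) ` (Ln n \<times> Ln n)" by blast
    qed
  qed
  have rectangle: "Q i j' + Q i' j \<le> Q i j + Q i' j'"
    if "i \<le> i'" "j \<le> j'" "i' \<le> n" "j' \<le> n" "{i, i', j, j'} \<inter> {0, n} \<noteq> {}" for i i' j j'
    using that boundary[of i] boundary[of i'] boundary[of j] boundary[of j']
      lip_fst[of i i' j] lip_fst[of i i' j'] lip_snd[of j j' i] lip_snd[of j j' i']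
    by auto
  show ?thesis
    unfolding IDQC_def mem_Collect_eq
    using outside image boundary lip_fst lip_snd rectangle by (simp add: Ln_def)
qed

lemma IDQC_D:
  assumes "Q \<in> IDQC n"
  shows IDQC_outside: "\<And>i j. i > n \<or> j > n \<Longrightarrow> Q i j = 0"
    and IDQC_boundary: "\<And>i. i \<le> n \<Longrightarrow> Q i 0 = 0 \<and> Q 0 i = 0 \<and> Q i n = i \<and> Q n i = i"
    and IDQC_lip_fst: "\<And>i i' j. i \<le> i' \<Longrightarrow> i' \<le> n \<Longrightarrow> j \<le> n \<Longrightarrow>
      Q i j \<le> Q i' j \<and> Q i' j \<le> Q i j + (i' - i)"
    and IDQC_lip_snd: "\<And>i j j'. j \<le> j' \<Longrightarrow> j' \<le> n \<Longrightarrow> i \<le> n \<Longrightarrow>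
      Q i j \<le> Q i j' \<and> Q i j' \<le> Q i j + (j' - j)"
proof -
  from assms have outside: "\<forall>i j. i > n \<or> j > n \<longrightarrow> Q i j = 0"
    and boundary: "\<forall>i\<le>n. Q i 0 = 0 \<and> Q 0 i = 0 \<and> Q i n = i \<and> Q n i = i"
    and mono_fst: "\<forall>i i' j. i \<le> i' \<and> i' \<le> n \<and> j \<le> n \<longrightarrow> Q i j \<le> Q i' j"
    and mono_snd: "\<forall>i j j'. j \<le> j' \<and> j' \<le> n \<and> i \<le> n \<longrightarrow> Q i j \<le> Q i j'"
    and rectangle: "\<forall>i i' j j'. i \<le> i' \<and> i' \<le> n \<and> j \<le> j' \<and> j' \<le> n \<and>
      {i, i', j, j'} \<inter> {0, n} \<noteq> {} \<longrightarrow> Q i j' + Q i' j \<le> Q i j + Q i' j'"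
    unfolding IDQC_def Ln_def by auto
  show "\<And>i j. i > n \<or> j > n \<Longrightarrow> Q i j = 0"
    and "\<And>i. i \<le> n \<Longrightarrow> Q i 0 = 0 \<and> Q 0 i = 0 \<and> Q i n = i \<and> Q n i = i"
    using outside boundary by blast+
  fix i i' j j'
  show "Q i j \<le> Q i' j \<and> Q i' j \<le> Q i j + (i' - i)" if "i \<le> i'" "i' \<le> n" "j \<le> n"
    using that mono_fst rectangle[rule_format, of i i' j n] boundary by auto
  show "Q i j \<le> Q i j' \<and> Q i j' \<le> Q i j + (j' - j)" if "j \<le> j'" "j' \<le> n" "i \<le> n"
    using that mono_snd rectangle[rule_format, of i n j j'] boundary by auto
qed

lemma IDQC_le_min:
  assumes "Q \<in> IDQC n" "a \<le> n" "b \<le> n"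
  shows "Q a b \<le> min a b"
  using IDQC_lip_fst[OF assms(1), of a n b] IDQC_lip_snd[OF assms(1), of b n a]
    IDQC_boundary[OF assms(1), of a] IDQC_boundary[OF assms(1), of b] assms(2,3)
  by simp

lemma IDQC_ge_Wn:
  assumes "Q \<in> IDQC n" "a \<le> n" "b \<le> n"
  shows "a + b \<le> Q a b + n"
  using IDQC_lip_fst[OF assms(1), of a n b] IDQC_boundary[OF assms(1), of b] assms(2,3)
  by linarith

lemma qle_antisym:
  assumes "P \<in> IDQC n" "Q \<in> IDQC n" "qle n P Q" "qle n Q P"
  shows "P = Q"
proof (intro ext)
  fix i j
  show "P i j = Q i j"
  proof (cases "i \<le> n \<and> j \<le> n")
    case True
    then show ?thesis using assms(3,4) by (force simp: qle_def Ln_def)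
  next
    case False
    then show ?thesis using IDQC_outside[OF assms(1)] IDQC_outside[OF assms(2)] by force
  qed
qed

definition pmin :: "(nat \<Rightarrow> nat \<Rightarrow> nat) \<Rightarrow> (nat \<Rightarrow> nat \<Rightarrow> nat) \<Rightarrow> nat \<Rightarrow> nat \<Rightarrow> nat" where
  "pmin P Q i j = min (P i j) (Q i j)"

lemma IDQC_pmin:
  assumes "P \<in> IDQC n" "Q \<in> IDQC n"
  shows "pmin P Q \<in> IDQC n"
proof (rule IDQC_I)
  note P = IDQC_D[OF assms(1)] and Q = IDQC_D[OF assms(2)]
  show "pmin P Q i j = 0" if "i > n \<or> j > n" for i j
    using P(1)[OF that] by (simp add: pmin_def)
  show "pmin P Q i 0 = 0 \<and> pmin P Q 0 i = 0 \<and> pmin P Q i n = i \<and> pmin P Q n i = i"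
    if "i \<le> n" for i
    using P(2)[OF that] Q(2)[OF that] by (simp add: pmin_def)
  show "pmin P Q i j \<le> pmin P Q i' j \<and> pmin P Q i' j \<le> pmin P Q i j + (i' - i)"
    if "i \<le> i'" "i' \<le> n" "j \<le> n" for i i' j
    using P(3)[OF that] Q(3)[OF that] by (auto simp: pmin_def min_def)
  show "pmin P Q i j \<le> pmin P Q i j' \<and> pmin P Q i j' \<le> pmin P Q i j + (j' - j)"
    if "j \<le> j'" "j' \<le> n" "i \<le> n" for i j j'
    using P(4)[OF that] Q(4)[OF that] by (auto simp: pmin_def min_def)
qed

lemma is_meet_pmin:
  assumes "P \<in> IDQC n" "Q \<in> IDQC n"
  shows "is_meet n (pmin P Q) P Q"
  using IDQC_pmin[OF assms] by (auto simp: is_meet_def qle_def pmin_def)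

definition cone :: "nat \<Rightarrow> nat \<Rightarrow> nat \<Rightarrow> nat \<Rightarrow> nat \<Rightarrow> nat \<Rightarrow> nat" where
  "cone n a b v i j = (if i \<le> n \<and> j \<le> n then min i (min j (v + (i - a) + (j - b))) else 0)"

lemma min_min_lipschitz:
  fixes x x' y z z' d :: nat
  assumes "x \<le> x'" "x' \<le> x + d" "z \<le> z'" "z' \<le> z + d"
  shows "min x (min y z) \<le> min x' (min y z') \<and> min x' (min y z') \<le> min x (min y z) + d"
  using assms by (simp add: min_def split: if_splits)

lemma cone_IDQC:
  assumes "a + b \<le> v + n"
  shows "cone n a b v \<in> IDQC n"
proof (rule IDQC_I)
  fix i i' j :: nat
  assume "i \<le> i'" "i' \<le> n" "j \<le> n"
  moreover from \<open>i \<le> i'\<close> \<open>i' \<le> n\<close> have "i \<le> n" by (rule le_trans)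
  moreover have "v + (i - a) + (j - b) \<le> v + (i' - a) + (j - b)"
    "v + (i' - a) + (j - b) \<le> v + (i - a) + (j - b) + (i' - i)"
    using \<open>i \<le> i'\<close> by arith+
  ultimately show "cone n a b v i j \<le> cone n a b v i' j
      \<and> cone n a b v i' j \<le> cone n a b v i j + (i' - i)"
    unfolding cone_def by (simp only: if_True simp_thms) (intro min_min_lipschitz; simp)
next
  fix i j j' :: nat
  assume "j \<le> j'" "j' \<le> n" "i \<le> n"
  moreover from \<open>j \<le> j'\<close> \<open>j' \<le> n\<close> have "j \<le> n" by (rule le_trans)
  moreover have "v + (i - a) + (j - b) \<le> v + (i - a) + (j' - b)"
    "v + (i - a) + (j' - b) \<le> v + (i - a) + (j - b) + (j' - j)"
    using \<open>j \<le> j'\<close> by arith+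
  ultimately show "cone n a b v i j \<le> cone n a b v i j'
      \<and> cone n a b v i j' \<le> cone n a b v i j + (j' - j)"
    unfolding cone_def min.left_commute[of i]
    by (simp only: if_True simp_thms) (intro min_min_lipschitz; simp)
qed (use assms in \<open>auto simp: cone_def\<close>)

lemma cone_apex:
  assumes "a \<le> n" "b \<le> n" "v \<le> min a b"
  shows "cone n a b v a b = v"
  using assms by (auto simp: cone_def)

lemma qle_cone:
  assumes Q: "Q \<in> IDQC n" and ab: "a \<le> n" "b \<le> n" and v: "Q a b \<le> v"
  shows "qle n Q (cone n a b v)"
  unfolding qle_def
proof (intro ballI)
  fix i j assume "i \<in> Ln n" "j \<in> Ln n"
  then have ij: "i \<le> n" "j \<le> n" by (auto simp: Ln_def)
  note lip_fst = IDQC_lip_fst[OF Q] and lip_snd = IDQC_lip_snd[OF Q]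
  have "max i a - a = i - a" "max j b - b = j - b" by auto
  moreover have "Q i j \<le> Q (max i a) j" "Q (max i a) j \<le> Q a j + (max i a - a)"
    using lip_fst[of i "max i a" j] lip_fst[of a "max i a" j] ij ab by auto
  moreover have "Q a j \<le> Q a (max j b)" "Q a (max j b) \<le> Q a b + (max j b - b)"
    using lip_snd[of j "max j b" a] lip_snd[of b "max j b" a] ij ab by auto
  ultimately have "Q i j \<le> v + (i - a) + (j - b)" using v by linarith
  then show "Q i j \<le> cone n a b v i j"
    using IDQC_le_min[OF Q ij] ij by (simp add: cone_def)
qed

(* The top element M\<^sub>n, cut off outside L\<^sub>n \<times> L\<^sub>n as IDQC requires. *)
definition qtop :: "nat \<Rightarrow> nat \<Rightarrow> nat \<Rightarrow> nat" where
  "qtop n i j = (if i \<le> n \<and> j \<le> n then min i j else 0)"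

lemma cone_eq_qtop:
  assumes "min a b \<le> v"
  shows "cone n a b v = qtop n"
proof -
  have "min i j \<le> v + (i - a) + (j - b)" for i j using assms by arith
  then have "min i (min j (v + (i - a) + (j - b))) = min i j" for i j
    by (metis min.assoc min.absorb1)
  then show ?thesis by (simp add: cone_def qtop_def fun_eq_iff)
qed

lemma qtop_IDQC: "qtop n \<in> IDQC n"
  using cone_IDQC[of 0 0 0 n] cone_eq_qtop[of 0 0 0 n] by simp

lemma qle_qtop:
  assumes "Q \<in> IDQC n"
  shows "qle n Q (qtop n)"
  using qle_cone[OF assms, of 0 0 0] IDQC_boundary[OF assms, of 0] cone_eq_qtop[of 0 0 0 n]
  by simp

lemma not_meet_irreducible_qtop: "\<not> meet_irreducible n (qtop n)"
  unfolding meet_irreducible_def using qle_qtop by blast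

definition cone_params :: "nat \<Rightarrow> (nat \<times> nat \<times> nat) set" where
  "cone_params n = {(a, b, v). a \<le> n \<and> b \<le> n \<and> a + b - n \<le> v \<and> v < min a b}"

lemma meet_irreducible_cone:
  assumes "(a, b, v) \<in> cone_params n"
  shows "meet_irreducible n (cone n a b v)"
proof -
  have abv: "a \<le> n" "b \<le> n" "a + b \<le> v + n" "v < min a b"
    using assms by (auto simp: cone_params_def)
  have cone: "cone n a b v \<in> IDQC n" and apex: "cone n a b v a b = v"
    using cone_IDQC cone_apex abv by auto
  have not_top: "\<not> qle n (qtop n) (cone n a b v)"
  proof
    assume "qle n (qtop n) (cone n a b v)"
    then have "qtop n a b \<le> cone n a b v a b" using abv by (auto simp: qle_def Ln_def)
    then show False using abv apex by (simp add: qtop_def)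
  qed
  have "cone n a b v = P \<or> cone n a b v = Q"
    if PQ: "P \<in> IDQC n" "Q \<in> IDQC n" and meet: "is_meet n (cone n a b v) P Q" for P Q
  proof -
    have "qle n (pmin P Q) (cone n a b v)"
      using meet IDQC_pmin[OF PQ] by (auto simp: is_meet_def qle_def pmin_def)
    then have "pmin P Q a b \<le> cone n a b v a b"
      using abv by (auto simp: qle_def Ln_def)
    then have "P a b \<le> v \<or> Q a b \<le> v"
      using apex by (simp add: pmin_def min_le_iff_disj)
    moreover have "qle n (cone n a b v) P" "qle n (cone n a b v) Q"
      using meet by (auto simp: is_meet_def)
    ultimately show ?thesis
      using qle_cone[OF PQ(1) abv(1,2)] qle_cone[OF PQ(2) abv(1,2)] qle_antisym cone PQ by metis
  qed
  then show ?thesis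
    unfolding meet_irreducible_def using cone not_top qtop_IDQC by blast
qed

lemma cone_eq_imp_params_eq:
  assumes params: "(a, b, v) \<in> cone_params n" "(a', b', v') \<in> cone_params n"
    and eq: "cone n a b v = cone n a' b' v'"
  shows "a = a' \<and> b = b' \<and> v = v'"
proof -
  have abv: "a \<le> n" "b \<le> n" "v < min a b" "a' \<le> n" "b' \<le> n" "v' < min a' b'"
    using params by (auto simp: cone_params_def)
  have apex_value: "w = x" if "w = min c (min d x)" "w < min c d" for w c d x :: nat
    using that by (auto simp: min_def split: if_splits)
  have "cone n a' b' v' a b = v" "cone n a b v a' b' = v'"
    using eq cone_apex[of a n b v] cone_apex[of a' n b' v'] abv by auto
  then have v: "v = min a (min b (v' + (a - a') + (b - b')))"
    and v': "v' = min a' (min b' (v + (a' - a) + (b' - b)))"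
    using abv unfolding cone_def by auto
  from apex_value[OF v abv(3)] apex_value[OF v' abv(6)] show ?thesis by arith
qed

lemma inj_on_cone: "inj_on (\<lambda>(a, b, v). cone n a b v) (cone_params n)"
proof (rule inj_onI)
  fix p p' :: "nat \<times> nat \<times> nat"
  assume "p \<in> cone_params n" "p' \<in> cone_params n"
    and "(\<lambda>(a, b, v). cone n a b v) p = (\<lambda>(a, b, v). cone n a b v) p'"
  then show "p = p'"
    by (cases p, cases p') (simp only: prod.case prod.inject cone_eq_imp_params_eq)
qed

definition meets :: "nat \<Rightarrow> (nat \<Rightarrow> nat \<Rightarrow> nat) list \<Rightarrow> nat \<Rightarrow> nat \<Rightarrow> nat" where
  "meets n Qs = foldr pmin Qs (qtop n)"

lemma IDQC_meets: "set Qs \<subseteq> IDQC n \<Longrightarrow> meets n Qs \<in> IDQC n"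
  by (induction Qs) (simp_all add: meets_def qtop_IDQC IDQC_pmin)

lemma meets_le: "Q \<in> set Qs \<Longrightarrow> meets n Qs i j \<le> Q i j"
  by (induction Qs) (auto simp: meets_def pmin_def)

lemma qle_meets:
  assumes "P \<in> IDQC n" "\<forall>Q\<in>set Qs. qle n P Q"
  shows "qle n P (meets n Qs)"
  using assms(2) qle_qtop[OF assms(1)]
  by (induction Qs) (auto simp: meets_def qle_def pmin_def)

lemma meet_irreducible_mem_meets:
  assumes "meet_irreducible n z" "set Qs \<subseteq> IDQC n" "meets n Qs = z"
  shows "z \<in> set Qs"
  using assms(2,3)
proof (induction Qs)
  case Nil
  then show ?case using assms(1) not_meet_irreducible_qtop[of n] by (auto simp: meets_def)
next
  case (Cons Q Qs)
  then have QQs: "Q \<in> IDQC n" "meets n Qs \<in> IDQC n" using IDQC_meets by auto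
  have "is_meet n z Q (meets n Qs)"
    using is_meet_pmin[OF QQs] Cons.prems(2) by (simp add: meets_def)
  then have "z = Q \<or> z = meets n Qs"
    using assms(1) QQs unfolding meet_irreducible_def by blast
  then show ?case using Cons by auto
qed

lemma meets_cones:
  assumes z: "z \<in> IDQC n" and ps: "set ps = {..n} \<times> {..n}"
  shows "meets n (map (\<lambda>(a, b). cone n a b (z a b)) ps) = z"
    (is "meets n ?cones = z")
proof (rule qle_antisym)
  have "cone n a b (z a b) \<in> IDQC n \<and> qle n z (cone n a b (z a b))"
    if "a \<le> n" "b \<le> n" for a b
    using cone_IDQC[OF IDQC_ge_Wn[OF z that]] qle_cone[OF z that order_refl] by blast
  then have cones: "\<forall>Q\<in>set ?cones. Q \<in> IDQC n \<and> qle n z Q"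
    using ps by auto
  then show "meets n ?cones \<in> IDQC n" by (intro IDQC_meets) blast
  show "qle n z (meets n ?cones)" using qle_meets[OF z] cones by blast
  show "qle n (meets n ?cones) z"
    unfolding qle_def
  proof (intro ballI)
    fix i j assume "i \<in> Ln n" "j \<in> Ln n"
    then have ij: "i \<le> n" "j \<le> n" by (auto simp: Ln_def)
    then have "(i, j) \<in> set ps" using ps by simp
    then have "meets n ?cones i j \<le> cone n i j (z i j) i j"
      by (intro meets_le) force
    also have "\<dots> = z i j" using cone_apex[OF ij IDQC_le_min[OF z ij]] .
    finally show "meets n ?cones i j \<le> z i j" .
  qed
qed (rule z)

lemma meet_irreducible_imp_cone:
  assumes mi: "meet_irreducible n z"
  shows "z \<in> (\<lambda>(a, b, v). cone n a b v) ` cone_params n"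
proof -
  obtain ps where ps: "set ps = {..n} \<times> {..n}"
    using finite_list[of "{..n} \<times> {..n}"] by blast
  define cones where "cones = map (\<lambda>(a, b). cone n a b (z a b)) ps"
  have z: "z \<in> IDQC n" using mi by (simp add: meet_irreducible_def)
  have "set cones \<subseteq> IDQC n"
    using ps cone_IDQC[OF IDQC_ge_Wn[OF z]] by (auto simp: cones_def)
  moreover have "meets n cones = z" unfolding cones_def by (rule meets_cones[OF z ps])
  ultimately have "z \<in> set cones" by (rule meet_irreducible_mem_meets[OF mi])
  then obtain p where p: "z = (\<lambda>(a, b). cone n a b (z a b)) p" "p \<in> set ps"
    unfolding cones_def set_map by (rule imageE)
  obtain a b where ab_p: "p = (a, b)" by (cases p)
  have z_cone: "z = cone n a b (z a b)" using p(1) unfolding ab_p prod.case .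
  have ab: "a \<le> n" "b \<le> n" using p(2) ps unfolding ab_p by auto
  obtain v where v: "v = z a b" by simp
  have "v < min a b"
  proof (rule ccontr)
    assume "\<not> v < min a b"
    then have "cone n a b v = qtop n" by (intro cone_eq_qtop) linarith
    then show False using mi z_cone v not_meet_irreducible_qtop by metis
  qed
  moreover have "a + b - n \<le> v" using IDQC_ge_Wn[OF z ab] v by simp
  ultimately have "(a, b, v) \<in> cone_params n" using ab by (simp add: cone_params_def)
  moreover have "z = cone n a b v" unfolding v by (rule z_cone)
  ultimately show ?thesis by (intro rev_image_eqI) auto
qed

lemma meet_irreducibles_eq_cones:
  "{z. meet_irreducible n z} = (\<lambda>(a, b, v). cone n a b v) ` cone_params n"
  using meet_irreducible_imp_cone meet_irreducible_cone by auto

lemma card_cone_params: "card (cone_params n) = (\<Sum>a=0..n. \<Sum>b=0..n. min a b - (a + b - n))"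
proof -
  have "cone_params n = (SIGMA a:{0..n}. SIGMA b:{0..n}. {a + b - n..<min a b})"
    by (auto simp: cone_params_def)
  then show ?thesis by (simp add: card_SigmaI)
qed

lemma int_card_cone_params: "int (card (cone_params n)) = mq n (Wn n)"
proof -
  have "int (card (cone_params n)) = (\<Sum>a=0..n. \<Sum>b=0..n. int (min a b) - int (a + b - n))"
    unfolding card_cone_params of_nat_sum by (intro sum.cong refl) (auto simp: of_nat_diff)
  also have "\<dots> = (\<Sum>a=1..n. \<Sum>b=1..n. int (min a b) - int (a + b - n))"
    by (simp add: sum.atLeast_Suc_atMost)
  also have "\<dots> = mq n (Wn n)"
    unfolding mq_def qnorm_def Mn_def Wn_def by (simp add: sum_subtractf)
  finally show ?thesis .
qed

lemma sum_int_atLeast1: "2 * (\<Sum>i=1..n. int i) = int n * (int n + 1)"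
  by (induction n) (simp_all add: sum.cl_ivl_Suc algebra_simps)

lemma sum_int_squares_atLeast1: "6 * (\<Sum>i=1..n. int i * int i) = int n * (int n + 1) * (2 * int n + 1)"
  by (induction n) (simp_all add: sum.cl_ivl_Suc algebra_simps)

lemma sum_Wn_row:
  assumes "i \<le> n"
  shows "2 * (\<Sum>j=1..n. int (i + j - n)) = int i * (int i + 1)"
  using assms
proof (induction n arbitrary: i)
  case (Suc n)
  show ?case
  proof (cases i)
    case 0
    then show ?thesis by simp
  next
    case (Suc i')
    then have "(\<Sum>j=1..Suc n. int (i + j - Suc n)) = (\<Sum>j=1..n. int (i' + j - n)) + int i"
      by (simp add: sum.cl_ivl_Suc)
    then show ?thesis using Suc.IH[of i'] Suc.prems Suc by (simp add: algebra_simps)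
  qed
qed simp

lemma sum_Mn_row:
  assumes "i \<le> n"
  shows "2 * (\<Sum>j=1..n. int (min i j)) = int i * (int i + 1) + 2 * int i * (int n - int i)"
  using assms
proof (induction n)
  case (Suc n)
  show ?case
  proof (cases "i \<le> n")
    case True
    then show ?thesis using Suc.IH by (simp add: sum.cl_ivl_Suc algebra_simps)
  next
    case False
    then have i: "i = Suc n" using Suc.prems by simp
    then have "(\<Sum>j=1..n. int (min i j)) = (\<Sum>j=1..n. int j)" by (intro sum.cong) auto
    then show ?thesis using sum_int_atLeast1[of n] i by (simp add: sum.cl_ivl_Suc algebra_simps)
  qed
qed simp

lemma mq_Wn_eq_sum: "mq n (Wn n) = (\<Sum>i=1..n. int i * (int n - int i))"
proof -
  have "mq n (Wn n) = (\<Sum>i=1..n. (\<Sum>j=1..n. int (min i j)) - (\<Sum>j=1..n. int (i + j - n)))"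
    unfolding mq_def qnorm_def Mn_def Wn_def by (simp add: sum_subtractf)
  also have "\<dots> = (\<Sum>i=1..n. int i * (int n - int i))"
  proof (rule sum.cong[OF refl])
    fix i assume "i \<in> {1..n}"
    then have "i \<le> n" by simp
    from sum_Mn_row[OF this] sum_Wn_row[OF this]
    show "(\<Sum>j=1..n. int (min i j)) - (\<Sum>j=1..n. int (i + j - n)) = int i * (int n - int i)"
      by linarith
  qed
  finally show ?thesis .
qed

lemma mq_Wn: "6 * mq n (Wn n) = (int n - 1) * int n * (int n + 1)"
proof -
  have "6 * mq n (Wn n) = 3 * int n * (2 * (\<Sum>i=1..n. int i)) - 6 * (\<Sum>i=1..n. int i * int i)"
    unfolding mq_Wn_eq_sum by (simp add: algebra_simps sum_subtractf sum_distrib_left)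
  also have "\<dots> = (int n - 1) * int n * (int n + 1)"
    unfolding sum_int_atLeast1 sum_int_squares_atLeast1 by (simp add: algebra_simps)
  finally show ?thesis .
qed

theorem mainTheorem12:
  fixes n :: nat
  assumes "n \<ge> 1"
  shows "6 * mq n (Wn n) = int ((n - 1) * n * (n + 1))
       \<and> mq n (Mn n) = 0
       \<and> 6 * int (card {z. meet_irreducible n z}) = int ((n - 1) * n * (n + 1))"
proof -
  have count: "int ((n - 1) * n * (n + 1)) = (int n - 1) * int n * (int n + 1)"
    using assms by (simp add: of_nat_diff algebra_simps)
  have "card {z. meet_irreducible n z} = card (cone_params n)"
    unfolding meet_irreducibles_eq_cones by (rule card_image[OF inj_on_cone])
  then have "int (card {z. meet_irreducible n z}) = mq n (Wn n)"
    using int_card_cone_params by simp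
  then show ?thesis using mq_Wn count by (simp add: mq_def)
qed

end
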